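(* Let $N\ge 1$ and $-\infty<a_i\le b_i<\infty$ with $r_i=(b_i-a_i)/2>0$ for all $i$; set $m_i=(a_i+b_i)/2$, $\Theta=\prod_{i=1}^N[a_i,b_i]$, $T(y)=\sum_{i=1}^N y_i$. Fix a sampling design $p$ with inclusion probabilities $\pi_i=\mathbb P_p(i\in S)>0$ for every $i$. Then the estimator $\widehat T(y_S)=\sum_{i=1}^N m_i+\sum_{i\in S}\frac{y_i-m_i}{\pi_i}$ is admissible in the class of unbiased estimators under squared-error loss: there is no unbiased estimator $\delta$ with $R(\delta,p;y)\le R(\widehat T,p;y)$ for all $y\in\Theta$ and strict inequality for some $y\in\Theta$.
   Context: A sampling design is a probability distribution $p$ on the subsets $s\subseteq\{1,\dots,N\}$; $S$ denotes the random sample drawn from $p$, $\mathbb P_p$ and $\mathbb E_p$ denote probability and expectation with respect to $p$. An estimator $\delta$ is a collection of measurable functions $\delta_s:\Theta_s\to\mathbb R$, one for each subset $s$, where $\Theta_s=\prod_{i\in s}[a_i,b_i]$; for $y\in\Theta$ write $y_s=(y_i)_{i\in s}$. The estimator is unbiased if $\mathbb E_p[\delta_S(y_S)]=T(y)$ for all $y\in\Theta$. The risk is $R(\delta,p;y)=\mathbb E_p[(\delta_S(y_S)-T(y))^2]$. *)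

theory Defs
  imports "HOL-Probability.Probability"
begin

text \<open>A data vector is y :: nat => real; only y 1..y N matter.
  An estimator is delta :: nat set => (nat => real) => real; on sample s it is applied to
  y_s, represented as restrict y s (a function on s, undefined elsewhere).\<close>

definition sampling_design :: "nat \<Rightarrow> (nat set \<Rightarrow> real) \<Rightarrow> bool" where
  "sampling_design N p \<longleftrightarrow> (\<forall>s \<in> Pow {1..N}. p s \<ge> 0) \<and> (\<Sum>s \<in> Pow {1..N}. p s) = 1"

definition incl_prob :: "nat \<Rightarrow> (nat set \<Rightarrow> real) \<Rightarrow> nat \<Rightarrow> real" where
  "incl_prob N p i = (\<Sum>s \<in> {s \<in> Pow {1..N}. i \<in> s}. p s)"

definition in_Theta :: "nat \<Rightarrow> (nat \<Rightarrow> real) \<Rightarrow> (nat \<Rightarrow> real) \<Rightarrow> (nat \<Rightarrow> real) \<Rightarrow> bool" where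
  "in_Theta N a b y \<longleftrightarrow> (\<forall>i \<in> {1..N}. a i \<le> y i \<and> y i \<le> b i)"

definition total :: "nat \<Rightarrow> (nat \<Rightarrow> real) \<Rightarrow> real" where
  "total N y = (\<Sum>i = 1..N. y i)"

definition estimator :: "nat \<Rightarrow> (nat \<Rightarrow> real) \<Rightarrow> (nat \<Rightarrow> real) \<Rightarrow> (nat set \<Rightarrow> (nat \<Rightarrow> real) \<Rightarrow> real) \<Rightarrow> bool" where
  "estimator N a b \<delta> \<longleftrightarrow>
     (\<forall>s \<in> Pow {1..N}. \<delta> s \<in> borel_measurable (PiM s (\<lambda>i. restrict_space borel {a i..b i})))"

definition expect_est :: "nat \<Rightarrow> (nat set \<Rightarrow> real) \<Rightarrow> (nat set \<Rightarrow> (nat \<Rightarrow> real) \<Rightarrow> real) \<Rightarrow> (nat \<Rightarrow> real) \<Rightarrow> real" where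
  "expect_est N p \<delta> y = (\<Sum>s \<in> Pow {1..N}. p s * \<delta> s (restrict y s))"

definition unbiased :: "nat \<Rightarrow> (nat \<Rightarrow> real) \<Rightarrow> (nat \<Rightarrow> real) \<Rightarrow> (nat set \<Rightarrow> real) \<Rightarrow> (nat set \<Rightarrow> (nat \<Rightarrow> real) \<Rightarrow> real) \<Rightarrow> bool" where
  "unbiased N a b p \<delta> \<longleftrightarrow> (\<forall>y. in_Theta N a b y \<longrightarrow> expect_est N p \<delta> y = total N y)"

definition risk :: "nat \<Rightarrow> (nat set \<Rightarrow> (nat \<Rightarrow> real) \<Rightarrow> real) \<Rightarrow> (nat set \<Rightarrow> real) \<Rightarrow> (nat \<Rightarrow> real) \<Rightarrow> real" where
  "risk N \<delta> p y = (\<Sum>s \<in> Pow {1..N}. p s * (\<delta> s (restrict y s) - total N y)\<^sup>2)"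

definition T_hat :: "nat \<Rightarrow> (nat \<Rightarrow> real) \<Rightarrow> (nat \<Rightarrow> real) \<Rightarrow> (nat set \<Rightarrow> real) \<Rightarrow> nat set \<Rightarrow> (nat \<Rightarrow> real) \<Rightarrow> real" where
  "T_hat N a b p s z =
     (\<Sum>i = 1..N. (a i + b i) / 2) + (\<Sum>i \<in> s. (z i - (a i + b i) / 2) / incl_prob N p i)"

end

theory Submission
  imports Defs
begin

(* Write a competing unbiased estimator as delta = T_hat + h and argue by induction on the number
   of coordinates in which y differs from the centre m. On a sample s that misses one of these
   coordinates, delta_s(y_s) only sees y'_s, where y' resets the coordinates outside s to m; y' has
   fewer deviating coordinates, so h_s = 0 by induction. On every sample containing all of them,
   T_hat_s(y_s) - T(y) is one constant c. Hence R(delta) = R(T_hat) + 2 c E h + E h^2, and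
   unbiasedness of both estimators gives E h = 0, so R(delta) >= R(T_hat) with equality only if
   h = 0 wherever p is positive. A dominating delta therefore agrees with T_hat on the support of p
   and has the same risk everywhere. *)

definition difference_estimator ::
    "nat \<Rightarrow> (nat set \<Rightarrow> real) \<Rightarrow> (nat \<Rightarrow> real) \<Rightarrow> nat set \<Rightarrow> (nat \<Rightarrow> real) \<Rightarrow> real" where
  "difference_estimator N p m s z = (\<Sum>i = 1..N. m i) + (\<Sum>i \<in> s. (z i - m i) / incl_prob N p i)"

lemma T_hat_eq_difference_estimator:
  "T_hat N a b p = difference_estimator N p (\<lambda>i. (a i + b i) / 2)"
  unfolding T_hat_def difference_estimator_def by (intro ext) (rule refl)

lemma difference_estimator_restrict [simp]:
  "difference_estimator N p m s (restrict y s) = difference_estimator N p m s y"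
  unfolding difference_estimator_def by (auto intro!: sum.cong)

lemma difference_estimator_superset:
  assumes "{i \<in> {1..N}. y i \<noteq> m i} \<subseteq> s" and "s \<subseteq> {1..N}"
  shows "difference_estimator N p m s y = difference_estimator N p m {i \<in> {1..N}. y i \<noteq> m i} y"
  unfolding difference_estimator_def using assms
  by (auto intro!: sum.mono_neutral_right intro: finite_subset)

lemma sampling_design_nonneg:
  "sampling_design N p \<Longrightarrow> s \<subseteq> {1..N} \<Longrightarrow> p s \<ge> 0"
  unfolding sampling_design_def by blast

lemma expect_est_difference_estimator:
  assumes sd: "sampling_design N p" and pi: "\<forall>i \<in> {1..N}. incl_prob N p i > 0"
  shows "expect_est N p (difference_estimator N p m) y = total N y"
proof -
  let ?P = "Pow {1..N}"
  let ?M = "\<Sum>i = 1..N. m i"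
  let ?f = "\<lambda>i. (y i - m i) / incl_prob N p i"
  have "p s * difference_estimator N p m s y = p s * ?M + (\<Sum>i\<in>{i\<in>{1..N}. i \<in> s}. p s * ?f i)"
    if "s \<in> ?P" for s
    using that unfolding difference_estimator_def
    by (auto simp: distrib_left sum_distrib_left intro!: sum.cong)
  then have "expect_est N p (difference_estimator N p m) y
      = (\<Sum>s\<in>?P. p s) * ?M + (\<Sum>s\<in>?P. \<Sum>i\<in>{i\<in>{1..N}. i \<in> s}. p s * ?f i)"
    unfolding expect_est_def difference_estimator_restrict by (simp add: sum.distrib sum_distrib_right)
  also have "\<dots> = ?M + (\<Sum>i\<in>{1..N}. \<Sum>s\<in>{s\<in>?P. i \<in> s}. p s * ?f i)"
    using sd unfolding sampling_design_def by (subst sum.swap_restrict) auto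
  also have "\<dots> = ?M + (\<Sum>i\<in>{1..N}. incl_prob N p i * ?f i)"
    by (simp only: incl_prob_def sum_distrib_right)
  also have "\<dots> = ?M + (\<Sum>i\<in>{1..N}. y i - m i)"
    using pi by (auto intro!: sum.cong)
  also have "\<dots> = total N y"
    unfolding total_def by (simp add: sum_subtractf)
  finally show ?thesis .
qed

lemma sum_weighted_square_add:
  fixes w h D :: "'a \<Rightarrow> 'b::comm_ring_1"
  assumes "(\<Sum>s\<in>P. w s * h s) = 0"
    and "\<And>s. s \<in> P \<Longrightarrow> w s \<noteq> 0 \<Longrightarrow> h s \<noteq> 0 \<Longrightarrow> D s = c"
  shows "(\<Sum>s\<in>P. w s * (h s + D s)\<^sup>2) = (\<Sum>s\<in>P. w s * (D s)\<^sup>2) + (\<Sum>s\<in>P. w s * (h s)\<^sup>2)"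
proof -
  have "w s * (h s + D s)\<^sup>2 = w s * (D s)\<^sup>2 + 2 * c * (w s * h s) + w s * (h s)\<^sup>2"
    if "s \<in> P" for s
    using assms(2)[OF that] by (cases "w s = 0 \<or> h s = 0") (auto simp: power2_eq_square algebra_simps)
  then have "(\<Sum>s\<in>P. w s * (h s + D s)\<^sup>2)
      = (\<Sum>s\<in>P. w s * (D s)\<^sup>2) + 2 * c * (\<Sum>s\<in>P. w s * h s) + (\<Sum>s\<in>P. w s * (h s)\<^sup>2)"
    by (simp add: sum.distrib sum_distrib_left)
  with assms(1) show ?thesis by simp
qed

lemma risk_eq_add_deviation:
  assumes sd: "sampling_design N p" and pi: "\<forall>i \<in> {1..N}. incl_prob N p i > 0"
    and unbiased_at_y: "expect_est N p \<delta> y = total N y"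
    and agree: "\<And>s. s \<subseteq> {1..N} \<Longrightarrow> p s \<noteq> 0 \<Longrightarrow> \<not> {i \<in> {1..N}. y i \<noteq> m i} \<subseteq> s \<Longrightarrow>
                  \<delta> s (restrict y s) = difference_estimator N p m s y"
  shows "risk N \<delta> p y = risk N (difference_estimator N p m) p y
           + (\<Sum>s\<in>Pow {1..N}. p s * (\<delta> s (restrict y s) - difference_estimator N p m s y)\<^sup>2)"
proof -
  define h where "h s = \<delta> s (restrict y s) - difference_estimator N p m s y" for s
  define D where "D s = difference_estimator N p m s y - total N y" for s
  have "(\<Sum>s\<in>Pow {1..N}. p s * h s)
      = expect_est N p \<delta> y - expect_est N p (difference_estimator N p m) y"
    unfolding expect_est_def h_def by (simp add: right_diff_distrib sum_subtractf)
  also have "\<dots> = 0"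
    using unbiased_at_y expect_est_difference_estimator[OF sd pi] by simp
  finally have mean_zero: "(\<Sum>s\<in>Pow {1..N}. p s * h s) = 0" .
  have D_const: "D s = D {i \<in> {1..N}. y i \<noteq> m i}"
    if "s \<in> Pow {1..N}" "p s \<noteq> 0" "h s \<noteq> 0" for s
    using that agree[of s] difference_estimator_superset[of N y m s p]
    unfolding h_def D_def by auto
  have "risk N \<delta> p y = (\<Sum>s\<in>Pow {1..N}. p s * (h s + D s)\<^sup>2)"
    unfolding risk_def h_def D_def by simp
  also have "\<dots> = risk N (difference_estimator N p m) p y + (\<Sum>s\<in>Pow {1..N}. p s * (h s)\<^sup>2)"
    unfolding risk_def D_def[symmetric] difference_estimator_restrict
    by (rule sum_weighted_square_add[OF mean_zero D_const])
  finally show ?thesis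
    unfolding h_def .
qed

lemma dominating_unbiased_eq_difference_estimator:
  assumes sd: "sampling_design N p" and pi: "\<forall>i \<in> {1..N}. incl_prob N p i > 0"
    and m_in: "in_Theta N a b m"
    and unb: "unbiased N a b p \<delta>"
    and dominates: "\<forall>y. in_Theta N a b y \<longrightarrow> risk N \<delta> p y \<le> risk N (difference_estimator N p m) p y"
    and y_in: "in_Theta N a b y" and s: "s \<subseteq> {1..N}" "p s \<noteq> 0"
  shows "\<delta> s (restrict y s) = difference_estimator N p m s y"
  using y_in s
proof (induction "card {i \<in> {1..N}. y i \<noteq> m i}" arbitrary: y s rule: less_induct)
  case less
  let ?h = "\<lambda>s. \<delta> s (restrict y s) - difference_estimator N p m s y"
  have agree: "\<delta> s' (restrict y s') = difference_estimator N p m s' y"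
    if s': "s' \<subseteq> {1..N}" "p s' \<noteq> 0" "\<not> {i \<in> {1..N}. y i \<noteq> m i} \<subseteq> s'" for s'
  proof -
    define y' where "y' i = (if i \<in> s' then y i else m i)" for i
    have "{i \<in> {1..N}. y' i \<noteq> m i} = {i \<in> {1..N}. y i \<noteq> m i} \<inter> s'"
      unfolding y'_def by auto
    with s'(3) have "{i \<in> {1..N}. y' i \<noteq> m i} \<subset> {i \<in> {1..N}. y i \<noteq> m i}"
      by blast
    then have "card {i \<in> {1..N}. y' i \<noteq> m i} < card {i \<in> {1..N}. y i \<noteq> m i}"
      by (simp add: psubset_card_mono)
    moreover have "in_Theta N a b y'"
      using less.prems(1) m_in unfolding in_Theta_def y'_def by auto
    ultimately have "\<delta> s' (restrict y' s') = difference_estimator N p m s' y'"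
      using less.hyps s'(1,2) by blast
    moreover have "restrict y' s' = restrict y s'"
      unfolding y'_def by (intro restrict_ext) simp
    ultimately show ?thesis
      by (metis difference_estimator_restrict)
  qed
  have "expect_est N p \<delta> y = total N y"
    using unb less.prems(1) unfolding unbiased_def by blast
  from risk_eq_add_deviation[OF sd pi this agree]
  have "risk N \<delta> p y = risk N (difference_estimator N p m) p y + (\<Sum>s\<in>Pow {1..N}. p s * (?h s)\<^sup>2)" .
  moreover have "risk N \<delta> p y \<le> risk N (difference_estimator N p m) p y"
    using dominates less.prems(1) by blast
  ultimately have "(\<Sum>s\<in>Pow {1..N}. p s * (?h s)\<^sup>2) \<le> 0"
    by linarith
  moreover have nonneg: "\<forall>s\<in>Pow {1..N}. p s * (?h s)\<^sup>2 \<ge> 0"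
    using sampling_design_nonneg[OF sd] by simp
  moreover have "(\<Sum>s\<in>Pow {1..N}. p s * (?h s)\<^sup>2) \<ge> 0"
    using nonneg by (meson sum_nonneg)
  ultimately have "(\<Sum>s\<in>Pow {1..N}. p s * (?h s)\<^sup>2) = 0"
    by linarith
  then have "\<forall>s\<in>Pow {1..N}. p s * (?h s)\<^sup>2 = 0"
    using sum_nonneg_eq_0_iff[of "Pow {1..N}" "\<lambda>s. p s * (?h s)\<^sup>2"] nonneg by simp
  with less.prems(2,3) show ?case by auto
qed

lemma risk_cong_on_support:
  assumes "\<And>s. s \<subseteq> {1..N} \<Longrightarrow> p s \<noteq> 0 \<Longrightarrow> \<delta> s (restrict y s) = \<delta>' s (restrict y s)"
  shows "risk N \<delta> p y = risk N \<delta>' p y"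
  unfolding risk_def by (intro sum.cong refl) (metis PowD assms mult_zero_left)

theorem proposition1:
  fixes N :: nat and a b :: "nat \<Rightarrow> real" and p :: "nat set \<Rightarrow> real"
  assumes "N \<ge> 1"
    and "\<forall>i \<in> {1..N}. (b i - a i) / 2 > 0"
    and "sampling_design N p"
    and "\<forall>i \<in> {1..N}. incl_prob N p i > 0"
  shows "\<not> (\<exists>\<delta>. estimator N a b \<delta> \<and> unbiased N a b p \<delta> \<and>
            (\<forall>y. in_Theta N a b y \<longrightarrow> risk N \<delta> p y \<le> risk N (T_hat N a b p) p y) \<and>
            (\<exists>y. in_Theta N a b y \<and> risk N \<delta> p y < risk N (T_hat N a b p) p y))"
proof
  let ?m = "\<lambda>i. (a i + b i) / 2"
  assume "\<exists>\<delta>. estimator N a b \<delta> \<and> unbiased N a b p \<delta> \<and>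
            (\<forall>y. in_Theta N a b y \<longrightarrow> risk N \<delta> p y \<le> risk N (T_hat N a b p) p y) \<and>
            (\<exists>y. in_Theta N a b y \<and> risk N \<delta> p y < risk N (T_hat N a b p) p y)"
  then obtain \<delta> y where unb: "unbiased N a b p \<delta>"
    and dominates: "\<forall>y. in_Theta N a b y \<longrightarrow> risk N \<delta> p y \<le> risk N (T_hat N a b p) p y"
    and y_in: "in_Theta N a b y" and strict: "risk N \<delta> p y < risk N (T_hat N a b p) p y"
    by blast
  have m_in: "in_Theta N a b ?m"
    using assms(2) unfolding in_Theta_def by auto
  have "\<delta> s (restrict y s) = T_hat N a b p s (restrict y s)" if "s \<subseteq> {1..N}" "p s \<noteq> 0" for s
    using dominating_unbiased_eq_difference_estimator[OF assms(3,4) m_in unb _ y_in that]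
      dominates unfolding T_hat_eq_difference_estimator by simp
  then have "risk N \<delta> p y = risk N (T_hat N a b p) p y"
    by (rule risk_cong_on_support)
  with strict show False by simp
qed

end
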